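(* Let $D$ be a non-commutative division ring with center $F$, and let $R$ be a maximal subring of $D$ with $F\nsubseteq R$. Then $C_R(R)=R\cap F$ is a maximal subring of $F$. Moreover: (1) if $R$ is not a division ring, then $R\cap F$ is a one-dimensional valuation ring (a $G$-domain with quotient field $F$); (2) if $R$ is a division ring, then $F\cap R\subset F$ is a finite minimal ring extension of fields (of minimum degree).
   Context: All rings are associative unital and subrings share the identity. A maximal subring of a ring $T$ is a proper subring maximal under inclusion among proper subrings of $T$; an extension $A\subset B$ is a minimal ring extension if $A$ is a maximal subring of $B$. $C_R(R)$ denotes the center of $R$. A $G$-domain is a domain in which the intersection of all nonzero prime ideals is nonzero. *)

theory Defs
  imports Main
begin

definition is_subring :: "'a::ring_1 set \<Rightarrow> bool" where
  "is_subring S \<longleftrightarrow> 1 \<in> S \<and> (\<forall>x\<in>S. \<forall>y\<in>S. x + y \<in> S \<and> x - y \<in> S \<and> x * y \<in> S)"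

definition maximal_subring :: "'a::ring_1 set \<Rightarrow> 'a set \<Rightarrow> bool" where
  "maximal_subring S T \<longleftrightarrow> is_subring S \<and> S \<subset> T \<and>
     (\<forall>S'. is_subring S' \<and> S \<subseteq> S' \<and> S' \<subset> T \<longrightarrow> S' = S)"

definition centre :: "'a::ring_1 set \<Rightarrow> 'a set" where
  "centre S = {x\<in>S. \<forall>y\<in>S. x * y = y * x}"

definition is_division_subring :: "'a::division_ring set \<Rightarrow> bool" where
  "is_division_subring S \<longleftrightarrow> is_subring S \<and> (\<forall>x\<in>S. x \<noteq> 0 \<longrightarrow> inverse x \<in> S)"

definition ideal_of :: "'a::ring_1 set \<Rightarrow> 'a set \<Rightarrow> bool" where
  "ideal_of I S \<longleftrightarrow> I \<subseteq> S \<and> 0 \<in> I \<and> (\<forall>x\<in>I. \<forall>y\<in>I. x + y \<in> I \<and> x - y \<in> I) \<and>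
     (\<forall>x\<in>I. \<forall>s\<in>S. s * x \<in> I \<and> x * s \<in> I)"

definition prime_ideal_of :: "'a::ring_1 set \<Rightarrow> 'a set \<Rightarrow> bool" where
  "prime_ideal_of P S \<longleftrightarrow> ideal_of P S \<and> P \<noteq> S \<and>
     (\<forall>a\<in>S. \<forall>b\<in>S. a * b \<in> P \<longrightarrow> a \<in> P \<or> b \<in> P)"

definition krull_dim_one :: "'a::ring_1 set \<Rightarrow> bool" where
  "krull_dim_one S \<longleftrightarrow>
     (\<exists>P0 P1. prime_ideal_of P0 S \<and> prime_ideal_of P1 S \<and> P0 \<subset> P1) \<and>
     \<not> (\<exists>P0 P1 P2. prime_ideal_of P0 S \<and> prime_ideal_of P1 S \<and> prime_ideal_of P2 S \<and>
                   P0 \<subset> P1 \<and> P1 \<subset> P2)"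

definition valuation_ring_of :: "'a::division_ring set \<Rightarrow> 'a set \<Rightarrow> bool" where
  "valuation_ring_of V K \<longleftrightarrow> is_subring V \<and> V \<subseteq> K \<and>
     (\<forall>x\<in>K. x \<noteq> 0 \<longrightarrow> x \<in> V \<or> inverse x \<in> V)"

definition G_domain :: "'a::ring_1 set \<Rightarrow> bool" where
  "G_domain S \<longleftrightarrow> \<Inter>{P. prime_ideal_of P S \<and> P \<noteq> {0}} \<noteq> {0}"

definition quotient_field_of :: "'a::division_ring set \<Rightarrow> 'a set \<Rightarrow> bool" where
  "quotient_field_of K S \<longleftrightarrow> S \<subseteq> K \<and>
     (\<forall>x\<in>K. \<exists>a\<in>S. \<exists>b\<in>S. b \<noteq> 0 \<and> x = a * inverse b)"

definition finite_extension :: "'a::division_ring set \<Rightarrow> 'a set \<Rightarrow> bool" where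
  "finite_extension K L \<longleftrightarrow> K \<subseteq> L \<and>
     (\<exists>B. finite B \<and> B \<subseteq> L \<and> (\<forall>x\<in>L. \<exists>c. (\<forall>b\<in>B. c b \<in> K) \<and> x = (\<Sum>b\<in>B. c b * b)))"

end

theory Submission
  imports Defs
begin

text \<open>Fix a central \<open>s \<notin> R\<close>. Maximality gives \<open>R[s] = D\<close>, so whatever commutes with \<open>R\<close>
  is central, whence \<open>C\<^sub>R(R) = R \<inter> F\<close>. The key observation is that a central \<open>q\<close> with
  \<open>q, q\<inverse> \<notin> R\<close> admits no nonzero \<open>l \<in> R\<close> with \<open>l q \<in> R\<close>: since \<open>q \<in> R[q\<inverse>]\<close>, \<open>D = R[q]\<close> is
  spanned by finitely many powers of \<open>q\<close>, and a power of \<open>l\<close> would then map all of \<open>D\<close> into \<open>R\<close>.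

  If \<open>R \<inter> F\<close> is a field, \<open>s\<inverse> \<in> R[s]\<close> yields a left \<open>R\<close>-linear relation among the powers
  of \<open>s\<close>. Dividing a shortest one by its leading coefficient gives central coefficients, which lie
  in \<open>R\<close> by the observation. So \<open>D = \<Sum>\<^sub>i\<^sub><\<^sub>k R s\<^sup>i\<close> with independent powers, and comparing
  coefficients shows that \<open>R\<close> is a division ring and \<open>F = \<Sum>\<^sub>i\<^sub><\<^sub>k (R \<inter> F) s\<^sup>i\<close>.

  Otherwise some \<open>a \<in> R \<inter> F\<close> has \<open>a\<inverse> \<notin> R\<close>. From \<open>D = R[a\<inverse>]\<close>, every element times a power
  of \<open>a\<close> lies in \<open>R\<close>, and the observation turns this into \<open>x\<inverse> \<in> R\<close> for all \<open>x \<in> F - R\<close>: so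
  \<open>R \<inter> F\<close> is a valuation ring of \<open>F\<close>, and the same clearing of denominators shows that its
  maximal ideal is its only nonzero prime.

  In both cases \<open>F\<close> is generated by \<open>R \<inter> F\<close> and any \<open>s \<in> F - R\<close>, i.e. \<open>R \<inter> F\<close> is maximal in \<open>F\<close>.\<close>

section \<open>Central elements and subrings\<close>

definition central :: "'a::ring_1 \<Rightarrow> bool" where
  "central c \<longleftrightarrow> (\<forall>z. c * z = z * c)"

lemma centre_UNIV_iff: "x \<in> centre UNIV \<longleftrightarrow> central x"
  by (simp add: centre_def central_def)

lemma central_commute: "central c \<Longrightarrow> c * z = z * c"
  by (simp add: central_def)

lemma central_mult: "central a \<Longrightarrow> central b \<Longrightarrow> central (a * b)"
  unfolding central_def by (metis mult.assoc)

lemma central_power: "central c \<Longrightarrow> central (c ^ n)"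
  by (induction n) (simp_all add: central_mult, simp add: central_def)

lemma central_inverse:
  fixes c :: "'a::division_ring"
  assumes "central c"
  shows "central (inverse c)"
proof (cases "c = 0")
  case False
  have "z * inverse c = inverse c * z" for z
  proof -
    have "z * inverse c = inverse c * (c * z) * inverse c"
      using False by (simp add: mult.assoc[symmetric])
    also have "\<dots> = inverse c * z * (c * inverse c)"
      using central_commute[OF assms, of z] by (simp add: mult.assoc)
    finally show ?thesis using False by simp
  qed
  then show ?thesis by (simp add: central_def)
qed (simp add: central_def)

lemma power_mult_central: "central q \<Longrightarrow> (l * q) ^ n = l ^ n * q ^ n"
proof (induction n)
  case (Suc n)
  have "(l * q) ^ Suc n = l ^ n * (q ^ n * l) * q"
    using Suc.IH[OF Suc.prems] by (simp only: power_Suc2 mult.assoc)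
  also have "\<dots> = l ^ Suc n * q ^ Suc n"
    unfolding central_commute[OF central_power[OF Suc.prems], of n l]
    by (simp only: power_Suc2 mult.assoc)
  finally show ?case .
qed simp

lemma is_subring_centre: "is_subring (centre (UNIV :: 'a::ring_1 set))"
  unfolding is_subring_def Ball_def centre_UNIV_iff
  by (simp add: central_mult) (simp add: central_def algebra_simps)

lemma is_division_subring_centre: "is_division_subring (centre (UNIV :: 'a::division_ring set))"
  unfolding is_division_subring_def Ball_def centre_UNIV_iff by (simp add: is_subring_centre central_inverse)

lemma is_subring_Int: "is_subring A \<Longrightarrow> is_subring B \<Longrightarrow> is_subring (A \<inter> B)"
  unfolding is_subring_def by blast

lemma is_division_subring_Int_centre:
  "is_division_subring R \<Longrightarrow> is_division_subring (R \<inter> centre UNIV)"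
  using is_division_subring_centre is_subring_Int unfolding is_division_subring_def by blast

lemma subring_zero: "is_subring S \<Longrightarrow> 0 \<in> S"
  unfolding is_subring_def by (metis diff_self)

lemma subring_one: "is_subring S \<Longrightarrow> 1 \<in> S"
  unfolding is_subring_def by blast

lemma subring_add: "is_subring S \<Longrightarrow> x \<in> S \<Longrightarrow> y \<in> S \<Longrightarrow> x + y \<in> S"
  unfolding is_subring_def by blast

lemma subring_diff: "is_subring S \<Longrightarrow> x \<in> S \<Longrightarrow> y \<in> S \<Longrightarrow> x - y \<in> S"
  unfolding is_subring_def by blast

lemma subring_mult: "is_subring S \<Longrightarrow> x \<in> S \<Longrightarrow> y \<in> S \<Longrightarrow> x * y \<in> S"
  unfolding is_subring_def by blast

lemma subring_uminus: "is_subring S \<Longrightarrow> x \<in> S \<Longrightarrow> - x \<in> S"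
  using subring_diff[of S 0 x] subring_zero[of S] by simp

lemma subring_power: "is_subring S \<Longrightarrow> x \<in> S \<Longrightarrow> x ^ n \<in> S"
  by (induction n) (auto intro: subring_one subring_mult)

lemma subring_sum:
  assumes "is_subring S" "\<And>i. i \<in> I \<Longrightarrow> f i \<in> S"
  shows "sum f I \<in> S"
proof (cases "finite I")
  case True
  then show ?thesis using assms(2)
    by (induction I rule: finite_induct) (auto intro: subring_zero[OF assms(1)] subring_add[OF assms(1)])
qed (simp add: subring_zero[OF assms(1)])

section \<open>Adjoining an element to a subring\<close>

inductive_set adjoin :: "'a::ring_1 set \<Rightarrow> 'a \<Rightarrow> 'a set" for R y where
  zero: "0 \<in> adjoin R y"
| add_monomial: "x \<in> adjoin R y \<Longrightarrow> r \<in> R \<Longrightarrow> x + r * y ^ k \<in> adjoin R y"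

lemma monomial_mem_adjoin: "r \<in> R \<Longrightarrow> r * y ^ k \<in> adjoin R y"
  using adjoin.add_monomial[OF adjoin.zero] by simp

lemma subset_adjoin: "R \<subseteq> adjoin R y"
  using monomial_mem_adjoin[of _ R y 0] by auto

lemma mem_adjoin: "is_subring R \<Longrightarrow> y \<in> adjoin R y"
  using monomial_mem_adjoin[of 1 R y 1] subring_one by auto

lemma adjoin_add:
  assumes "x \<in> adjoin R y" "z \<in> adjoin R y"
  shows "x + z \<in> adjoin R y"
  using assms(2)
proof (induction z rule: adjoin.induct)
  case (add_monomial z r k)
  then show ?case using adjoin.add_monomial[of "x + z"] by (simp add: add.assoc)
qed (use assms(1) in simp)

lemma adjoin_uminus:
  assumes "is_subring R" "x \<in> adjoin R y"
  shows "- x \<in> adjoin R y"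
  using assms(2)
proof (induction x rule: adjoin.induct)
  case (add_monomial x r k)
  then have "- x + (- r) * y ^ k \<in> adjoin R y"
    using subring_uminus[OF assms(1)] by (blast intro: adjoin.add_monomial)
  then show ?case by (simp add: add.commute)
qed (simp add: adjoin.zero)

lemma adjoin_mult_monomial:
  assumes "is_subring R" "central y" "x \<in> adjoin R y" "r \<in> R"
  shows "x * (r * y ^ k) \<in> adjoin R y"
  using assms(3)
proof (induction x rule: adjoin.induct)
  case (add_monomial x r' j)
  have "r' * y ^ j * (r * y ^ k) = r' * (y ^ j * r) * y ^ k" by (simp add: mult.assoc)
  also have "\<dots> = (r' * r) * y ^ (j + k)"
    by (simp add: central_commute[OF central_power[OF assms(2)], of j r] power_add mult.assoc)
  finally have "r' * y ^ j * (r * y ^ k) = (r' * r) * y ^ (j + k)" .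
  then have "(x + r' * y ^ j) * (r * y ^ k) = x * (r * y ^ k) + (r' * r) * y ^ (j + k)"
    by (simp add: distrib_right)
  moreover have "r' * r \<in> R" using subring_mult[OF assms(1) add_monomial.hyps(2) assms(4)] .
  ultimately show ?case using adjoin.add_monomial[OF add_monomial.IH] by simp
qed (simp add: adjoin.zero)

lemma adjoin_mult:
  assumes "is_subring R" "central y" "x \<in> adjoin R y" "z \<in> adjoin R y"
  shows "x * z \<in> adjoin R y"
  using assms(4)
proof (induction z rule: adjoin.induct)
  case (add_monomial z r k)
  have "x * z + x * (r * y ^ k) \<in> adjoin R y"
    using adjoin_add[OF add_monomial.IH adjoin_mult_monomial[OF assms(1-3) add_monomial.hyps(2)]] .
  then show ?case by (simp add: distrib_left)
qed (simp add: adjoin.zero)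

lemma is_subring_adjoin:
  assumes "is_subring R" "central y"
  shows "is_subring (adjoin R y)"
  unfolding is_subring_def[of "adjoin R y"]
proof (intro conjI ballI)
  show "1 \<in> adjoin R y" using subset_adjoin subring_one[OF assms(1)] by blast
  fix x z assume xz: "x \<in> adjoin R y" "z \<in> adjoin R y"
  show "x + z \<in> adjoin R y" using adjoin_add[OF xz] .
  show "x - z \<in> adjoin R y"
    unfolding diff_conv_add_uminus using adjoin_add[OF xz(1) adjoin_uminus[OF assms(1) xz(2)]] .
  show "x * z \<in> adjoin R y" using adjoin_mult[OF assms xz] .
qed

lemma adjoin_subset:
  assumes "is_subring S" "R \<subseteq> S" "y \<in> S"
  shows "adjoin R y \<subseteq> S"
proof
  fix x assume "x \<in> adjoin R y"
  then show "x \<in> S"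
  proof (induction x rule: adjoin.induct)
    case (add_monomial x r k)
    then show ?case
      using assms by (blast intro: subring_add subring_mult subring_power)
  qed (rule subring_zero[OF assms(1)])
qed

definition span_powers :: "'a::ring_1 set \<Rightarrow> 'a \<Rightarrow> nat \<Rightarrow> 'a set" where
  "span_powers R y n = {(\<Sum>i<n. c i * y ^ i) | c. \<forall>i<n. c i \<in> R}"

lemma span_powers_zero: "is_subring R \<Longrightarrow> 0 \<in> span_powers R y n"
  unfolding span_powers_def using subring_zero by (intro CollectI exI[of _ "\<lambda>_. 0"]) auto

lemma span_powers_add:
  assumes "is_subring R" "x \<in> span_powers R y n" "z \<in> span_powers R y n"
  shows "x + z \<in> span_powers R y n"
proof -
  obtain c d where "\<forall>i<n. c i \<in> R" "x = (\<Sum>i<n. c i * y ^ i)"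
    and "\<forall>i<n. d i \<in> R" "z = (\<Sum>i<n. d i * y ^ i)"
    using assms(2,3) unfolding span_powers_def by blast
  then show ?thesis
    unfolding span_powers_def using subring_add[OF assms(1)]
    by (intro CollectI exI[of _ "\<lambda>i. c i + d i"]) (simp add: distrib_right sum.distrib)
qed

lemma span_powers_left_mult:
  assumes "is_subring R" "r \<in> R" "x \<in> span_powers R y n"
  shows "r * x \<in> span_powers R y n"
proof -
  obtain c where "\<forall>i<n. c i \<in> R" "x = (\<Sum>i<n. c i * y ^ i)"
    using assms(3) unfolding span_powers_def by blast
  then show ?thesis
    unfolding span_powers_def using subring_mult[OF assms(1) assms(2)]
    by (intro CollectI exI[of _ "\<lambda>i. r * c i"]) (simp add: sum_distrib_left mult.assoc)
qed

lemma sum_indicator_powers: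
  fixes y :: "'a::ring_1"
  assumes "j < n"
  shows "(\<Sum>i<n. (if i = j then 1 else 0) * y ^ i) = y ^ j"
proof -
  have "(\<Sum>i<n. (if i = j then 1 else 0) * y ^ i) = (\<Sum>i<n. if i = j then y ^ j else 0)"
    by (rule sum.cong) auto
  then show ?thesis using assms by (simp add: sum.delta)
qed

lemma power_mem_span_powers:
  assumes "is_subring R" "j < n"
  shows "y ^ j \<in> span_powers R y n"
proof -
  have "(\<Sum>i<n. (if i = j then 1 else 0) * y ^ i) = y ^ j"
    using sum_indicator_powers[OF assms(2)] .
  then show ?thesis
    unfolding span_powers_def using subring_zero[OF assms(1)] subring_one[OF assms(1)]
    by (intro CollectI exI[of _ "\<lambda>i. if i = j then 1 else 0"]) auto
qed

lemma span_powers_Suc_cases: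
  assumes "x \<in> span_powers R y (Suc n)"
  obtains x' c where "x' \<in> span_powers R y n" "c \<in> R" "x = x' + c * y ^ n"
proof -
  obtain c where c: "\<forall>i<Suc n. c i \<in> R" "x = (\<Sum>i<Suc n. c i * y ^ i)"
    using assms unfolding span_powers_def by blast
  have "(\<Sum>i<n. c i * y ^ i) \<in> span_powers R y n"
    unfolding span_powers_def using c(1) by auto
  then show ?thesis by (rule that) (use c in auto)
qed

lemma span_powers_mono:
  assumes "is_subring R" "n \<le> m"
  shows "span_powers R y n \<subseteq> span_powers R y m"
proof (rule lift_Suc_mono_le[OF _ assms(2)])
  fix n
  show "span_powers R y n \<subseteq> span_powers R y (Suc n)"
  proof
    fix x assume "x \<in> span_powers R y n"
    then obtain c where "\<forall>i<n. c i \<in> R" "x = (\<Sum>i<n. c i * y ^ i)"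
      unfolding span_powers_def by blast
    then show "x \<in> span_powers R y (Suc n)"
      unfolding span_powers_def using subring_zero[OF assms(1)]
      by (intro CollectI exI[of _ "c(n := 0)"]) (auto simp: less_Suc_eq)
  qed
qed

lemma span_powers_mult:
  assumes "is_subring R" "x \<in> span_powers R y n"
  shows "x * y \<in> span_powers R y (Suc n)"
proof -
  obtain c where c: "\<forall>i<n. c i \<in> R" "x = (\<Sum>i<n. c i * y ^ i)"
    using assms(2) unfolding span_powers_def by blast
  define c' where "c' i = (case i of 0 \<Rightarrow> 0 | Suc j \<Rightarrow> c j)" for i
  have "(\<Sum>i<Suc n. c' i * y ^ i) = (\<Sum>i<n. c i * y ^ Suc i)"
    unfolding sum.lessThan_Suc_shift c'_def by simp
  also have "\<dots> = x * y"
    unfolding c(2) sum_distrib_right by (simp add: mult.assoc power_commutes)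
  finally show ?thesis
    unfolding span_powers_def using c(1) subring_zero[OF assms(1)]
    by (intro CollectI exI[of _ c']) (auto simp: c'_def split: nat.split)
qed

lemma span_powers_mult_power:
  assumes "is_subring R" "x \<in> span_powers R y n"
  shows "x * y ^ j \<in> span_powers R y (n + j)"
proof (induction j)
  case (Suc j)
  then have "x * y ^ j * y \<in> span_powers R y (Suc (n + j))"
    using span_powers_mult[OF assms(1)] by blast
  then show ?case by (simp add: mult.assoc power_commutes)
qed (use assms(2) in simp)

lemma span_powers_subset_adjoin: "span_powers R y n \<subseteq> adjoin R y"
proof (induction n)
  case 0
  then show ?case by (simp add: span_powers_def adjoin.zero)
next
  case (Suc n)
  show ?case
  proof
    fix x assume "x \<in> span_powers R y (Suc n)"
    then obtain x' c where "x' \<in> span_powers R y n" "c \<in> R" "x = x' + c * y ^ n"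
      by (rule span_powers_Suc_cases)
    then show "x \<in> adjoin R y" using Suc by (auto intro: adjoin.add_monomial)
  qed
qed

lemma adjoin_subset_UN_span_powers:
  assumes "is_subring R"
  shows "adjoin R y \<subseteq> (\<Union>n. span_powers R y n)"
proof
  fix x assume "x \<in> adjoin R y"
  then show "x \<in> (\<Union>n. span_powers R y n)"
  proof (induction x rule: adjoin.induct)
    case zero
    show ?case using span_powers_zero[OF assms] by blast
  next
    case (add_monomial x r k)
    then obtain n where "x \<in> span_powers R y n" by blast
    then have "x \<in> span_powers R y (max n (Suc k))"
      by (rule subsetD[OF span_powers_mono[OF assms max.cobounded1]])
    moreover have "r * y ^ k \<in> span_powers R y (max n (Suc k))"
      using add_monomial.hyps(2) assms by (simp add: span_powers_left_mult power_mem_span_powers)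
    ultimately have "x + r * y ^ k \<in> span_powers R y (max n (Suc k))"
      by (rule span_powers_add[OF assms])
    then show ?case by (rule UN_I[OF UNIV_I])
  qed
qed

lemma adjoin_subset_span_powers:
  assumes R: "is_subring R" and yn: "y ^ n \<in> span_powers R y n"
  shows "adjoin R y \<subseteq> span_powers R y n"
proof -
  have mult_y: "x * y \<in> span_powers R y n" if x: "x \<in> span_powers R y n" for x
  proof -
    obtain x' c where "x' \<in> span_powers R y n" "c \<in> R" "x * y = x' + c * y ^ n"
      using span_powers_mult[OF R x] by (rule span_powers_Suc_cases)
    then show ?thesis using span_powers_add[OF R] span_powers_left_mult[OF R _ yn] by simp
  qed
  have powers: "y ^ j \<in> span_powers R y n" for j
  proof (induction j)
    case 0
    then show ?case using yn power_mem_span_powers[OF R, of 0 n y] by (cases n) auto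
  next
    case (Suc j)
    then show ?case using mult_y[OF Suc.IH] by (simp only: power_Suc2)
  qed
  show ?thesis
  proof
    fix x assume "x \<in> adjoin R y"
    then show "x \<in> span_powers R y n"
    proof (induction x rule: adjoin.induct)
      case (add_monomial x r k)
      then show ?case using span_powers_add[OF R] span_powers_left_mult[OF R _ powers] by blast
    qed (rule span_powers_zero[OF R])
  qed
qed

lemma clear_denominators:
  fixes q :: "'a::division_ring"
  assumes R: "is_subring R" and "q \<noteq> 0" and "d \<in> adjoin R (inverse q)"
  shows "\<exists>m. d * q ^ m \<in> span_powers R q (Suc m)"
  using assms(3)
proof (induction d rule: adjoin.induct)
  case zero
  show ?case using span_powers_zero[OF R] by auto
next
  case (add_monomial x r k)
  then obtain m where m: "x * q ^ m \<in> span_powers R q (Suc m)" by blast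
  have "inverse q ^ k * q ^ (m + k) = inverse (q ^ k) * q ^ k * q ^ m"
    by (simp add: power_inverse mult.assoc flip: power_add[of q k m] add.commute)
  then have "inverse q ^ k * q ^ (m + k) = q ^ m" using \<open>q \<noteq> 0\<close> by simp
  then have "(x + r * inverse q ^ k) * q ^ (m + k) = x * q ^ m * q ^ k + r * q ^ m"
    by (simp add: distrib_right power_add mult.assoc)
  moreover have "x * q ^ m * q ^ k \<in> span_powers R q (Suc (m + k))"
    using span_powers_mult_power[OF R m, of k] by simp
  moreover have "r * q ^ m \<in> span_powers R q (Suc (m + k))"
    using add_monomial.hyps(2) by (simp add: R span_powers_left_mult power_mem_span_powers)
  ultimately have "(x + r * inverse q ^ k) * q ^ (m + k) \<in> span_powers R q (Suc (m + k))"
    using span_powers_add[OF R] by simp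
  then show ?case by blast
qed

lemma mult_span_powers_mem:
  assumes R: "is_subring R" and "central q" and cq: "\<And>i. i < n \<Longrightarrow> c * q ^ i \<in> R"
    and "x \<in> span_powers R q n"
  shows "c * x \<in> R"
proof -
  obtain a where a: "\<forall>i<n. a i \<in> R" "x = (\<Sum>i<n. a i * q ^ i)"
    using assms(4) unfolding span_powers_def by blast
  have "c * (a i * q ^ i) = c * q ^ i * a i" for i
    using central_commute[OF central_power[OF \<open>central q\<close>], of i "a i"] by (simp add: mult.assoc)
  then have "c * x = (\<Sum>i<n. c * q ^ i * a i)"
    unfolding a(2) sum_distrib_left by simp
  also have "\<dots> \<in> R"
    using a(1) cq by (intro subring_sum[OF R]) (simp add: subring_mult[OF R])
  finally show ?thesis .
qed

definition powers_independent :: "'a::ring_1 set \<Rightarrow> 'a \<Rightarrow> nat \<Rightarrow> bool" where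
  "powers_independent R y n \<longleftrightarrow>
     (\<forall>c. (\<forall>i<n. c i \<in> R) \<longrightarrow> (\<Sum>i<n. c i * y ^ i) = 0 \<longrightarrow> (\<forall>i<n. c i = 0))"

lemma powers_independent_coeff_eq:
  assumes R: "is_subring R" and "powers_independent R y n"
    and "\<forall>i<n. c i \<in> R" "\<forall>i<n. d i \<in> R" "(\<Sum>i<n. c i * y ^ i) = (\<Sum>i<n. d i * y ^ i)"
    and "i < n"
  shows "c i = d i"
proof -
  have "(\<Sum>i<n. (c i - d i) * y ^ i) = 0"
    using assms(5) by (simp add: left_diff_distrib sum_subtractf)
  moreover have "\<forall>i<n. c i - d i \<in> R" using assms(3,4) subring_diff[OF R] by blast
  ultimately show ?thesis
    using assms(2,6) unfolding powers_independent_def by (auto dest!: spec[of _ "\<lambda>i. c i - d i"])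
qed

lemma relation_coeffs_commute:
  assumes R: "is_subring R" and s: "central s" and indep: "powers_independent R s k"
    and p: "\<forall>j<Suc k. p j \<in> R" "(\<Sum>j<Suc k. p j * s ^ j) = 0" and "i < k" and t: "t \<in> R"
  shows "p i * t * p k = p k * t * p i"
proof (rule powers_independent_coeff_eq[OF R indep _ _ _ \<open>i < k\<close>])
  have "p j \<in> R" if "j \<le> k" for j using p(1) that by simp
  then show "\<forall>j<k. p j * t * p k \<in> R" "\<forall>j<k. p k * t * p j \<in> R"
    using t by (auto intro!: subring_mult[OF R])
  \<comment> \<open>compare the relation times \<open>t * p k\<close> on the right with the relation times \<open>p k * t\<close> on the left\<close>
  have lower: "(\<Sum>j<k. p j * s ^ j) = - (p k * s ^ k)"
    using p(2) by (simp add: eq_neg_iff_add_eq_0)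
  have "(\<Sum>j<k. p j * t * p k * s ^ j) = (\<Sum>j<k. p j * s ^ j) * (t * p k)"
    unfolding sum_distrib_right
    by (simp add: central_commute[OF central_power[OF s], of _ "t * p k"] mult.assoc)
  also have "\<dots> = p k * t * (\<Sum>j<k. p j * s ^ j)"
    unfolding lower using central_commute[OF central_power[OF s], of k "t * p k"]
    by (simp add: mult.assoc)
  also have "\<dots> = (\<Sum>j<k. p k * t * p j * s ^ j)"
    by (simp add: sum_distrib_left mult.assoc)
  finally show "(\<Sum>j<k. p j * t * p k * s ^ j) = (\<Sum>j<k. p k * t * p j * s ^ j)" .
qed

lemma finite_extension_if_subset_span_powers:
  assumes A: "is_subring A" and "A \<subseteq> K" and "\<And>i. y ^ i \<in> K" and K: "K \<subseteq> span_powers A y n"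
  shows "finite_extension A K"
  unfolding finite_extension_def
proof (intro conjI exI[of _ "(\<lambda>i. y ^ i) ` {..<n}"] ballI)
  show "A \<subseteq> K" by fact
  show "finite ((\<lambda>i. y ^ i) ` {..<n})" by simp
  show "(\<lambda>i. y ^ i) ` {..<n} \<subseteq> K" using assms(3) by blast
  fix x assume "x \<in> K"
  then obtain c where c: "\<forall>i<n. c i \<in> A" "x = (\<Sum>i<n. c i * y ^ i)"
    using K unfolding span_powers_def by blast
  \<comment> \<open>the powers need not be distinct, so coefficients of equal powers are collected\<close>
  define c' where "c' b = (\<Sum>i\<in>{i \<in> {..<n}. y ^ i = b}. c i)" for b
  have "c' b \<in> A" for b
    unfolding c'_def by (rule subring_sum[OF A]) (use c(1) in auto)
  moreover have "x = (\<Sum>b\<in>(\<lambda>i. y ^ i) ` {..<n}. c' b * b)"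
  proof -
    have "x = (\<Sum>b\<in>(\<lambda>i. y ^ i) ` {..<n}. \<Sum>i\<in>{i \<in> {..<n}. y ^ i = b}. c i * y ^ i)"
      unfolding c(2) by (rule sum.image_gen) simp
    also have "\<dots> = (\<Sum>b\<in>(\<lambda>i. y ^ i) ` {..<n}. c' b * b)"
      unfolding c'_def sum_distrib_right by (intro sum.cong refl) auto
    finally show ?thesis .
  qed
  ultimately show "\<exists>c. (\<forall>b\<in>(\<lambda>i. y ^ i) ` {..<n}. c b \<in> A) \<and> x = (\<Sum>b\<in>(\<lambda>i. y ^ i) ` {..<n}. c b * b)"
    by (intro exI[of _ c']) simp
qed

section \<open>Valuation rings and their prime ideals\<close>

definition nonunits_of :: "'a::division_ring set \<Rightarrow> 'a set" where
  "nonunits_of V = {y \<in> V. y = 0 \<or> inverse y \<notin> V}"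

lemma ideal_eq_if_one_mem: "ideal_of P V \<Longrightarrow> 1 \<in> P \<Longrightarrow> P = V"
  unfolding ideal_of_def by (metis mult_1_right subsetI subset_antisym)

lemma proper_ideal_subset_nonunits:
  fixes P V :: "'a::division_ring set"
  assumes P: "ideal_of P V" "P \<noteq> V"
  shows "P \<subseteq> nonunits_of V"
proof
  fix y assume y: "y \<in> P"
  show "y \<in> nonunits_of V"
  proof (rule ccontr)
    assume "y \<notin> nonunits_of V"
    then have "y \<noteq> 0" "inverse y \<in> V" using y P(1) unfolding nonunits_of_def ideal_of_def by auto
    then have "1 \<in> P" using y P(1) unfolding ideal_of_def by (metis left_inverse)
    then show False using ideal_eq_if_one_mem P by blast
  qed
qed

lemma inverse_mem_if_inverse_add_mem:
  fixes x y :: "'a::division_ring"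
  assumes V: "is_subring V" and "x * inverse y \<in> V" "inverse (x + y) \<in> V" "x + y \<noteq> 0" "y \<noteq> 0"
  shows "inverse y \<in> V"
proof -
  have "x * inverse y + 1 = (x + y) * inverse y" using \<open>y \<noteq> 0\<close> by (simp add: distrib_right)
  then have "inverse y = inverse (x + y) * (x * inverse y + 1)"
    using \<open>x + y \<noteq> 0\<close> by (simp add: mult.assoc[symmetric])
  also have "\<dots> \<in> V" using assms(2,3) by (simp add: V subring_mult subring_add subring_one)
  finally show ?thesis .
qed

lemma nonunits_add:
  assumes val: "valuation_ring_of V K" and K: "is_division_subring K"
    and x: "x \<in> nonunits_of V" and y: "y \<in> nonunits_of V"
  shows "x + y \<in> nonunits_of V"
proof (rule ccontr)
  have V: "is_subring V" "V \<subseteq> K" using val unfolding valuation_ring_of_def by auto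
  assume xy: "x + y \<notin> nonunits_of V"
  then have unit: "x + y \<noteq> 0" "inverse (x + y) \<in> V"
    using x y subring_add[OF V(1)] unfolding nonunits_of_def by auto
  have "x \<noteq> 0" "y \<noteq> 0" using x y xy by auto
  then have non: "inverse x \<notin> V" "inverse y \<notin> V" using x y unfolding nonunits_of_def by auto
  have "x * inverse y \<in> K" "x * inverse y \<noteq> 0"
    using x y V K \<open>x \<noteq> 0\<close> \<open>y \<noteq> 0\<close> unfolding nonunits_of_def is_division_subring_def
    by (auto intro: subring_mult)
  then have "x * inverse y \<in> V \<or> inverse (x * inverse y) \<in> V"
    using val unfolding valuation_ring_of_def by blast
  moreover have "inverse (x * inverse y) = y * inverse x"
    using \<open>x \<noteq> 0\<close> \<open>y \<noteq> 0\<close> by (simp add: nonzero_inverse_mult_distrib)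
  ultimately have "x * inverse y \<in> V \<or> y * inverse x \<in> V" by simp
  then show False
  proof
    assume "x * inverse y \<in> V"
    then show False
      using inverse_mem_if_inverse_add_mem[OF V(1) _ unit(2,1) \<open>y \<noteq> 0\<close>] non(2) by blast
  next
    assume "y * inverse x \<in> V"
    then show False
      using inverse_mem_if_inverse_add_mem[OF V(1), of y x] unit non(1) \<open>x \<noteq> 0\<close>
      by (simp add: add.commute)
  qed
qed

lemma nonunits_mult:
  fixes V :: "'a::division_ring set"
  assumes V: "is_subring V" and s: "s \<in> V" and x: "x \<in> nonunits_of V"
  shows "s * x \<in> nonunits_of V" "x * s \<in> nonunits_of V"
proof -
  have x_nonunit: "inverse x \<notin> V" if "x \<noteq> 0" using x that unfolding nonunits_of_def by auto
  have x_V: "x \<in> V" using x unfolding nonunits_of_def by auto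
  show "s * x \<in> nonunits_of V"
  proof (cases "s * x = 0 \<or> inverse (s * x) \<notin> V")
    case False
    then have "s \<noteq> 0" "x \<noteq> 0" "inverse (s * x) * s \<in> V" using subring_mult[OF V _ s] by auto
    then show ?thesis using x_nonunit by (simp add: nonzero_inverse_mult_distrib mult.assoc)
  qed (use s x_V subring_mult[OF V] in \<open>auto simp: nonunits_of_def\<close>)
  show "x * s \<in> nonunits_of V"
  proof (cases "x * s = 0 \<or> inverse (x * s) \<notin> V")
    case False
    then have "s \<noteq> 0" "x \<noteq> 0" "s * inverse (x * s) \<in> V" using subring_mult[OF V s] by auto
    then show ?thesis using x_nonunit by (simp add: nonzero_inverse_mult_distrib flip: mult.assoc)
  qed (use s x_V subring_mult[OF V] in \<open>auto simp: nonunits_of_def\<close>)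
qed

lemma prime_ideal_nonunits:
  assumes val: "valuation_ring_of V K" and K: "is_division_subring K"
  shows "prime_ideal_of (nonunits_of V) V"
proof -
  have V: "is_subring V" using val unfolding valuation_ring_of_def by auto
  have "1 \<notin> nonunits_of V" using subring_one[OF V] by (simp add: nonunits_of_def)
  show ?thesis
    unfolding prime_ideal_of_def ideal_of_def
  proof (intro conjI ballI impI)
    show "nonunits_of V \<subseteq> V" by (auto simp: nonunits_of_def)
    show "0 \<in> nonunits_of V" by (simp add: nonunits_of_def subring_zero[OF V])
    show "nonunits_of V \<noteq> V" using \<open>1 \<notin> nonunits_of V\<close> subring_one[OF V] by blast
  next
    fix x y assume x: "x \<in> nonunits_of V" and y: "y \<in> nonunits_of V"
    show "x + y \<in> nonunits_of V" by (rule nonunits_add[OF val K x y])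
    have "- y \<in> nonunits_of V"
      using nonunits_mult(1)[OF V subring_uminus[OF V subring_one[OF V]] y] by simp
    then show "x - y \<in> nonunits_of V"
      using nonunits_add[OF val K x] by (simp only: diff_conv_add_uminus)
  next
    fix x s assume "x \<in> nonunits_of V" "s \<in> V"
    then show "s * x \<in> nonunits_of V" "x * s \<in> nonunits_of V" using nonunits_mult[OF V] by auto
  next
    fix a b assume ab: "a \<in> V" "b \<in> V" "a * b \<in> nonunits_of V"
    show "a \<in> nonunits_of V \<or> b \<in> nonunits_of V"
    proof (rule ccontr)
      assume "\<not> ?thesis"
      then have "a \<noteq> 0" "b \<noteq> 0" "inverse a \<in> V" "inverse b \<in> V"
        using ab(1,2) by (auto simp: nonunits_of_def)
      then have "inverse (a * b) \<in> V" "a * b \<noteq> 0"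
        using subring_mult[OF V] by (simp_all add: nonzero_inverse_mult_distrib)
      then show False using ab(3) by (simp add: nonunits_of_def)
    qed
  qed
qed

lemma prime_ideal_zero:
  fixes V :: "'a::division_ring set"
  assumes "is_subring V"
  shows "prime_ideal_of {0} V"
  using subring_zero[OF assms] subring_one[OF assms] unfolding prime_ideal_of_def ideal_of_def by auto

lemma prime_ideal_power_mem:
  assumes P: "prime_ideal_of P V" and V: "is_subring V" "y \<in> V" and "y ^ m \<in> P"
  shows "y \<in> P"
  using assms(4)
proof (induction m)
  case 0
  then show ?case using P ideal_eq_if_one_mem unfolding prime_ideal_of_def by auto
next
  case (Suc m)
  then have "y * y ^ m \<in> P" by simp
  then have "y \<in> P \<or> y ^ m \<in> P" using P V subring_power[OF V] unfolding prime_ideal_of_def by blast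
  then show ?case using Suc.IH by blast
qed

lemma krull_dim_one_if_unique_nonzero_prime:
  assumes "prime_ideal_of {0} V" "prime_ideal_of N V" "N \<noteq> {0}"
    and unique: "\<And>P. prime_ideal_of P V \<Longrightarrow> P \<noteq> {0} \<Longrightarrow> P = N"
  shows "krull_dim_one V"
  unfolding krull_dim_one_def
proof (intro conjI notI)
  have "{0} \<subset> N" using assms(2,3) unfolding prime_ideal_of_def ideal_of_def by auto
  then show "\<exists>P0 P1. prime_ideal_of P0 V \<and> prime_ideal_of P1 V \<and> P0 \<subset> P1" using assms(1,2) by blast
next
  assume "\<exists>P0 P1 P2. prime_ideal_of P0 V \<and> prime_ideal_of P1 V \<and> prime_ideal_of P2 V \<and>
    P0 \<subset> P1 \<and> P1 \<subset> P2"
  then obtain P0 P1 P2 where P: "prime_ideal_of P0 V" "prime_ideal_of P1 V" "prime_ideal_of P2 V"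
    "P0 \<subset> P1" "P1 \<subset> P2" by blast
  have "0 \<in> P0" using P(1) unfolding prime_ideal_of_def ideal_of_def by auto
  then have "P1 \<noteq> {0}" "P2 \<noteq> {0}" using P(4,5) by auto
  then show False using unique P(2,3,5) by blast
qed

lemma G_domain_if_unique_nonzero_prime:
  assumes "prime_ideal_of N V" "N \<noteq> {0}"
    and "\<And>P. prime_ideal_of P V \<Longrightarrow> P \<noteq> {0} \<Longrightarrow> P = N"
  shows "G_domain V"
proof -
  have "{P. prime_ideal_of P V \<and> P \<noteq> {0}} = {N}" using assms by blast
  then show ?thesis unfolding G_domain_def using assms(2) by simp
qed

lemma quotient_field_of_valuation_ring:
  fixes V K :: "'a::division_ring set"
  assumes "valuation_ring_of V K"
  shows "quotient_field_of K V"
  unfolding quotient_field_of_def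
proof (intro conjI ballI)
  have V: "is_subring V" "V \<subseteq> K" using assms unfolding valuation_ring_of_def by auto
  show "V \<subseteq> K" by (fact V(2))
  fix x assume "x \<in> K"
  show "\<exists>a\<in>V. \<exists>b\<in>V. b \<noteq> 0 \<and> x = a * inverse b"
  proof (cases "x \<in> V")
    case True
    then show ?thesis using subring_one[OF V(1)] by (intro bexI[of _ x] bexI[of _ 1]) auto
  next
    case False
    then have "inverse x \<in> V" "x \<noteq> 0"
      using assms \<open>x \<in> K\<close> subring_zero[OF V(1)] unfolding valuation_ring_of_def by auto
    then show ?thesis using subring_one[OF V(1)] by (intro bexI[of _ 1] bexI[of _ "inverse x"]) auto
  qed
qed

section \<open>Maximal subrings of a division ring\<close>

locale max_subring =
  fixes R :: "'a::division_ring set"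
  assumes maximal: "maximal_subring R UNIV"
    and centre_not_subset: "\<not> centre UNIV \<subseteq> R"
begin

lemma subring: "is_subring R"
  using maximal unfolding maximal_subring_def by blast

lemma proper: "R \<noteq> UNIV"
  using maximal unfolding maximal_subring_def by blast

lemma is_subring_Int_centre: "is_subring (R \<inter> centre UNIV)"
  by (rule is_subring_Int[OF subring is_subring_centre])

lemma eq_UNIV_if_superset: "is_subring S \<Longrightarrow> R \<subseteq> S \<Longrightarrow> \<not> S \<subseteq> R \<Longrightarrow> S = UNIV"
  using maximal unfolding maximal_subring_def by blast

lemma obtain_central_notin:
  obtains s where "central s" "s \<notin> R"
  using centre_not_subset unfolding subset_eq Ball_def centre_UNIV_iff by blast

lemma adjoin_eq_UNIV:
  assumes "central y" "y \<notin> R"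
  shows "adjoin R y = UNIV"
  using eq_UNIV_if_superset[OF is_subring_adjoin[OF subring assms(1)] subset_adjoin]
    mem_adjoin[OF subring] assms(2) by blast

lemma central_if_commutes:
  assumes "\<And>r. r \<in> R \<Longrightarrow> c * r = r * c"
  shows "central c"
proof -
  obtain s where s: "central s" "s \<notin> R" by (rule obtain_central_notin)
  have "c * z = z * c" if "z \<in> adjoin R s" for z
    using that
  proof (induction z rule: adjoin.induct)
    case (add_monomial x r k)
    have "c * (r * s ^ k) = r * s ^ k * c"
      using assms[OF add_monomial.hyps(2)] central_commute[OF central_power[OF s(1)], of k c]
      by (metis mult.assoc)
    then show ?case using add_monomial.IH by (simp add: distrib_left distrib_right)
  qed simp
  then show ?thesis using adjoin_eq_UNIV[OF s] by (simp add: central_def)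
qed

lemma centre_eq: "centre R = R \<inter> centre UNIV"
  using central_if_commutes unfolding centre_def by (auto simp: central_def)

lemma exists_mult_power_mem:
  assumes "y \<in> R" "central y" "y \<noteq> 0" "inverse y \<notin> R"
  shows "\<exists>m. f * y ^ m \<in> R"
proof -
  have "f \<in> adjoin R (inverse y)"
    using adjoin_eq_UNIV[OF central_inverse[OF assms(2)] assms(4)] by simp
  then obtain m where "f * y ^ m \<in> span_powers R y (Suc m)"
    using clear_denominators[OF subring assms(3)] by blast
  moreover have "span_powers R y (Suc m) \<subseteq> R"
    using span_powers_subset_adjoin adjoin_subset[OF subring order_refl assms(1)] by blast
  ultimately show ?thesis by blast
qed

lemma mult_notin_if_inverse_notin:
  assumes q: "central q" "q \<notin> R" "inverse q \<notin> R" and l: "l \<in> R" "l \<noteq> 0"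
  shows "l * q \<notin> R"
proof
  assume lq: "l * q \<in> R"
  have "q \<noteq> 0" using q(2) subring_zero[OF subring] by auto
  have "q \<in> adjoin R (inverse q)" using adjoin_eq_UNIV[OF central_inverse[OF q(1)] q(3)] by simp
  then obtain m where "q ^ Suc m \<in> span_powers R q (Suc m)"
    using clear_denominators[OF subring \<open>q \<noteq> 0\<close>] by auto
  then have span: "span_powers R q (Suc m) = UNIV"
    using adjoin_subset_span_powers[OF subring] adjoin_eq_UNIV[OF q(1,2)] by blast
  have "l ^ Suc m * q ^ i \<in> R" if "i < Suc m" for i
  proof -
    have "l ^ Suc m = l ^ (Suc m - i) * l ^ i" using that by (simp flip: power_add)
    then have "l ^ Suc m * q ^ i = l ^ (Suc m - i) * (l * q) ^ i"
      by (simp add: power_mult_central[OF q(1)] mult.assoc)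
    then show ?thesis using l(1) lq by (simp add: subring subring_mult subring_power)
  qed
  then have "l ^ Suc m * x \<in> R" for x
    using mult_span_powers_mem[OF subring q(1)] span by blast
  moreover have "x = l ^ Suc m * (inverse (l ^ Suc m) * x)" for x
    using l(2) by (simp flip: mult.assoc)
  ultimately have "x \<in> R" for x by metis
  then show False using proper by blast
qed

lemma not_powers_independent:
  assumes "central s" "s \<notin> R"
  shows "\<exists>n. \<not> powers_independent R s n"
proof -
  have "s \<noteq> 0" using assms(2) subring_zero[OF subring] by auto
  obtain n where "inverse s \<in> span_powers R s n"
    using adjoin_eq_UNIV[OF assms] adjoin_subset_UN_span_powers[OF subring] by blast
  then obtain c where c: "\<forall>i<n. c i \<in> R" "inverse s = (\<Sum>i<n. c i * s ^ i)"
    unfolding span_powers_def by blast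
  define p where "p i = (case i of 0 \<Rightarrow> -1 | Suc j \<Rightarrow> c j)" for i
  have "(\<Sum>i<Suc n. p i * s ^ i) = -1 + (\<Sum>i<n. c i * s ^ i) * s"
    unfolding sum.lessThan_Suc_shift sum_distrib_right by (simp add: p_def mult.assoc power_commutes)
  also have "\<dots> = 0" unfolding c(2)[symmetric] using \<open>s \<noteq> 0\<close> by simp
  finally have "(\<Sum>i<Suc n. p i * s ^ i) = 0" .
  moreover have "\<forall>i<Suc n. p i \<in> R"
    using c(1) subring_uminus[OF subring subring_one[OF subring]] by (auto simp: p_def split: nat.split)
  moreover have "p 0 \<noteq> 0" by (simp add: p_def)
  ultimately have "\<not> powers_independent R s (Suc n)"
    unfolding powers_independent_def by (auto dest!: spec[of _ p])
  then show ?thesis ..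
qed

lemma central_normalised_coeff:
  assumes s: "central s" and indep: "powers_independent R s k"
    and p: "\<forall>j<Suc k. p j \<in> R" "(\<Sum>j<Suc k. p j * s ^ j) = 0" and "i < k"
  shows "central (inverse (p k) * p i)"
proof (cases "p k = 0")
  case False
  note comm = relation_coeffs_commute[OF subring s indep p \<open>i < k\<close>]
  have "inverse (p k) * p i = inverse (p k) * (p i * p k) * inverse (p k)"
    using False by (simp add: mult.assoc)
  also have "\<dots> = p i * inverse (p k)"
    using comm[OF subring_one[OF subring]] False by (simp flip: mult.assoc)
  finally have "inverse (p k) * p i = p i * inverse (p k)" .
  then have "inverse (p k) * p i * t = t * (inverse (p k) * p i)" if "t \<in> R" for t
  proof -
    have "inverse (p k) * p i * t = inverse (p k) * (p i * t * p k) * inverse (p k)"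
      using False by (simp add: mult.assoc)
    also have "\<dots> = t * p i * inverse (p k)"
      using comm[OF that] False by (simp add: mult.assoc flip: mult.assoc[of "inverse (p k)" "p k"])
    finally show ?thesis using \<open>inverse (p k) * p i = p i * inverse (p k)\<close> by (simp add: mult.assoc)
  qed
  then show ?thesis using central_if_commutes by blast
qed (simp add: central_def)

lemma maximal_subring_centre_if_adjoin:
  assumes "\<And>s. central s \<Longrightarrow> s \<notin> R \<Longrightarrow> centre UNIV \<subseteq> adjoin (R \<inter> centre UNIV) s"
  shows "maximal_subring (R \<inter> centre UNIV) (centre UNIV)"
  unfolding maximal_subring_def
proof (intro conjI allI impI)
  show "is_subring (R \<inter> centre UNIV)" by (rule is_subring_Int_centre)
  show "R \<inter> centre UNIV \<subset> centre UNIV" using centre_not_subset by blast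
  fix S assume S: "is_subring S \<and> R \<inter> centre UNIV \<subseteq> S \<and> S \<subset> centre UNIV"
  show "S = R \<inter> centre UNIV"
  proof (rule ccontr)
    assume "S \<noteq> R \<inter> centre UNIV"
    then obtain s where "s \<in> S" "s \<notin> R" using S by blast
    have "central s" using \<open>s \<in> S\<close> S centre_UNIV_iff by blast
    have "adjoin (R \<inter> centre UNIV) s \<subseteq> S"
      using adjoin_subset[of S "R \<inter> centre UNIV" s] S \<open>s \<in> S\<close> by blast
    then have "centre UNIV \<subseteq> S" using assms[OF \<open>central s\<close> \<open>s \<notin> R\<close>] by blast
    then show False using S by blast
  qed
qed

end

locale max_subring_field_centre = max_subring +
  assumes inverse_mem_centre: "a \<in> R \<Longrightarrow> central a \<Longrightarrow> a \<noteq> 0 \<Longrightarrow> inverse a \<in> R"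
begin

lemma inverse_notin: "central q \<Longrightarrow> q \<notin> R \<Longrightarrow> inverse q \<notin> R"
  using inverse_mem_centre[of "inverse q"] central_inverse subring_zero[OF subring] by force

lemma power_mem_span_powers_if_dependent:
  assumes s: "central s" "s \<notin> R"
    and indep: "powers_independent R s k" and dep: "\<not> powers_independent R s (Suc k)"
  shows "s ^ k \<in> span_powers R s k"
proof -
  obtain p where p: "\<forall>i<Suc k. p i \<in> R" "(\<Sum>i<Suc k. p i * s ^ i) = 0" "\<exists>i<Suc k. p i \<noteq> 0"
    using dep unfolding powers_independent_def by blast
  have "p k \<noteq> 0"
  proof
    assume "p k = 0"
    then have "\<forall>i<k. p i = 0"
      using p(1,2) indep unfolding powers_independent_def by simp
    then show False using p(3) \<open>p k = 0\<close> less_Suc_eq by auto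
  qed
  define q where "q i = inverse (p k) * p i" for i
  have "q i \<in> R" if "i < k" for i
  proof (rule ccontr)
    assume "q i \<notin> R"
    have "central (q i)" unfolding q_def using central_normalised_coeff[OF s(1) indep p(1,2) that] .
    then have "p k * q i \<notin> R"
      using mult_notin_if_inverse_notin \<open>q i \<notin> R\<close> inverse_notin p(1) \<open>p k \<noteq> 0\<close> by blast
    moreover have "p k * q i = p i" using \<open>p k \<noteq> 0\<close> by (simp add: q_def flip: mult.assoc)
    ultimately show False using p(1) that by simp
  qed
  moreover have "s ^ k = (\<Sum>i<k. (- q i) * s ^ i)"
  proof -
    have "(\<Sum>i<k. q i * s ^ i) + s ^ k = inverse (p k) * (\<Sum>i<Suc k. p i * s ^ i)"
      using \<open>p k \<noteq> 0\<close> by (simp add: q_def sum_distrib_left distrib_left flip: mult.assoc)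
    then show ?thesis using p(2) by (simp add: sum_negf add_eq_0_iff2)
  qed
  ultimately show ?thesis
    unfolding span_powers_def
    by (intro CollectI exI[of _ "\<lambda>i. - q i"]) (auto intro: subring_uminus[OF subring])
qed

lemma obtain_powers_basis:
  assumes "central s" "s \<notin> R"
  obtains k where "0 < k" "powers_independent R s k" "span_powers R s k = UNIV"
proof -
  obtain n where "\<not> powers_independent R s n" using not_powers_independent[OF assms] ..
  moreover have "powers_independent R s 0" by (simp add: powers_independent_def)
  ultimately obtain k where k: "powers_independent R s k" "\<not> powers_independent R s (Suc k)"
    by (induction n) auto
  have "adjoin R s \<subseteq> span_powers R s k"
    by (rule adjoin_subset_span_powers[OF subring power_mem_span_powers_if_dependent[OF assms k]])
  then have "span_powers R s k = UNIV" using adjoin_eq_UNIV[OF assms] by auto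
  have "span_powers R s 0 = {0}" by (auto simp: span_powers_def)
  have "0 < k"
  proof (rule ccontr)
    assume "\<not> 0 < k"
    then have "(1::'a) \<in> {0}"
      using \<open>span_powers R s k = UNIV\<close> \<open>span_powers R s 0 = {0}\<close> by simp
    then show False by simp
  qed
  then show ?thesis using that k(1) \<open>span_powers R s k = UNIV\<close> by blast
qed

lemma is_division_subring: "is_division_subring R"
  unfolding is_division_subring_def
proof (intro conjI ballI impI subring)
  fix r assume r: "r \<in> R" "r \<noteq> 0"
  obtain s where s: "central s" "s \<notin> R" by (rule obtain_central_notin)
  obtain k where k: "0 < k" "powers_independent R s k" "span_powers R s k = UNIV"
    using obtain_powers_basis[OF s] .
  obtain c where c: "\<forall>i<k. c i \<in> R" "inverse r = (\<Sum>i<k. c i * s ^ i)"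
    using k(3) unfolding span_powers_def by blast
  have "(\<Sum>i<k. (r * c i) * s ^ i) = (\<Sum>i<k. (if i = 0 then 1 else 0) * s ^ i)"
    unfolding sum_indicator_powers[OF k(1)] using r(2)
    by (simp add: mult.assoc flip: sum_distrib_left c(2))
  then have "r * c 0 = 1"
    using powers_independent_coeff_eq[OF subring k(2), of "\<lambda>i. r * c i" "\<lambda>i. if i = 0 then 1 else 0" 0]
      c(1) r(1) k(1)
      subring_zero[OF subring] subring_one[OF subring] subring_mult[OF subring] by auto
  then have "inverse r = c 0" by (rule inverse_unique)
  then show "inverse r \<in> R" using c(1) k(1) by simp
qed

lemma centre_subset_span_powers:
  assumes "central s" "s \<notin> R"
  obtains k where "centre UNIV \<subseteq> span_powers (R \<inter> centre UNIV) s k"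
proof -
  obtain k where k: "powers_independent R s k" "span_powers R s k = UNIV"
    using obtain_powers_basis[OF assms] by blast
  have "f \<in> span_powers (R \<inter> centre UNIV) s k" if f: "central f" for f
  proof -
    obtain c where c: "\<forall>i<k. c i \<in> R" "f = (\<Sum>i<k. c i * s ^ i)"
      using k(2) unfolding span_powers_def by blast
    have "central (c i)" if "i < k" for i
    proof (rule central_if_commutes)
      fix t assume t: "t \<in> R"
      have "(\<Sum>j<k. (t * c j) * s ^ j) = (\<Sum>j<k. (c j * t) * s ^ j)"
        using central_commute[OF f, of t]
        by (simp add: c(2) sum_distrib_left sum_distrib_right mult.assoc
            central_commute[OF central_power[OF assms(1)], of _ t])
      then show "c i * t = t * c i"
        using powers_independent_coeff_eq[OF subring k(1), of "\<lambda>j. t * c j" "\<lambda>j. c j * t" i]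
          c(1) t \<open>i < k\<close> subring_mult[OF subring] by auto
    qed
    then show ?thesis using c unfolding span_powers_def by (auto simp: centre_UNIV_iff)
  qed
  then have "centre UNIV \<subseteq> span_powers (R \<inter> centre UNIV) s k" by (auto simp: centre_UNIV_iff)
  then show ?thesis by (rule that)
qed

lemma finite_extension_centre: "finite_extension (R \<inter> centre UNIV) (centre UNIV)"
proof -
  obtain s where s: "central s" "s \<notin> R" by (rule obtain_central_notin)
  obtain k where k: "centre UNIV \<subseteq> span_powers (R \<inter> centre UNIV) s k"
    using centre_subset_span_powers[OF s] .
  show ?thesis
    by (rule finite_extension_if_subset_span_powers[OF is_subring_Int_centre Int_lower2 _ k])
      (simp add: centre_UNIV_iff central_power[OF s(1)])
qed

lemma maximal_subring_centre: "maximal_subring (R \<inter> centre UNIV) (centre UNIV)"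
proof (rule maximal_subring_centre_if_adjoin)
  fix s assume "central s" "s \<notin> R"
  then obtain k where "centre UNIV \<subseteq> span_powers (R \<inter> centre UNIV) s k"
    by (rule centre_subset_span_powers)
  then show "centre UNIV \<subseteq> adjoin (R \<inter> centre UNIV) s"
    using span_powers_subset_adjoin by blast
qed

end

locale max_subring_nonunit_centre = max_subring +
  fixes a :: "'a::division_ring"
  assumes nonunit: "a \<in> R" "central a" "a \<noteq> 0" "inverse a \<notin> R"
begin

lemma not_division_subring: "\<not> is_division_subring R"
  using nonunit unfolding is_division_subring_def by blast

lemma inverse_mem_if_notin:
  assumes "central x" "x \<notin> R"
  shows "inverse x \<in> R"
proof (rule ccontr)
  assume "inverse x \<notin> R"
  obtain m where "x * a ^ m \<in> R" using exists_mult_power_mem[OF nonunit] by blast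
  moreover have "a ^ m * x \<notin> R"
    using mult_notin_if_inverse_notin[OF assms \<open>inverse x \<notin> R\<close> subring_power[OF subring nonunit(1)]]
      nonunit(3) by simp
  ultimately show False using central_commute[OF assms(1), of "a ^ m"] by simp
qed

lemma valuation_ring_centre: "valuation_ring_of (R \<inter> centre UNIV) (centre UNIV)"
  unfolding valuation_ring_of_def
  using is_subring_Int_centre inverse_mem_if_notin central_inverse by (auto simp: centre_UNIV_iff)

lemma maximal_subring_centre: "maximal_subring (R \<inter> centre UNIV) (centre UNIV)"
proof (rule maximal_subring_centre_if_adjoin)
  fix s assume s: "central s" "s \<notin> R"
  then have "s \<noteq> 0" using subring_zero[OF subring] by auto
  show "centre UNIV \<subseteq> adjoin (R \<inter> centre UNIV) s"
  proof
    fix f :: 'a assume "f \<in> centre UNIV"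
    obtain m where m: "f * inverse s ^ m \<in> R"
      using exists_mult_power_mem[OF inverse_mem_if_notin[OF s] central_inverse[OF s(1)]] s \<open>s \<noteq> 0\<close>
      by auto
    moreover have "central (f * inverse s ^ m)"
      using \<open>f \<in> centre UNIV\<close> unfolding centre_UNIV_iff
      by (intro central_mult central_power central_inverse s(1))
    moreover have "f = f * inverse s ^ m * s ^ m"
      using \<open>s \<noteq> 0\<close> by (simp add: mult.assoc power_inverse)
    ultimately show "f \<in> adjoin (R \<inter> centre UNIV) s"
      using monomial_mem_adjoin[of "f * inverse s ^ m" "R \<inter> centre UNIV" s m]
      by (simp add: centre_UNIV_iff)
  qed
qed

lemma prime_ideal_eq_nonunits:
  assumes P: "prime_ideal_of P (R \<inter> centre UNIV)" "P \<noteq> {0}"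
  shows "P = nonunits_of (R \<inter> centre UNIV)"
proof
  have ideal: "ideal_of P (R \<inter> centre UNIV)" "P \<noteq> R \<inter> centre UNIV"
    using P(1) unfolding prime_ideal_of_def by auto
  then show "P \<subseteq> nonunits_of (R \<inter> centre UNIV)" by (rule proper_ideal_subset_nonunits)
  obtain b where b: "b \<in> P" "b \<noteq> 0"
    using P(2) ideal(1) unfolding ideal_of_def by blast
  then have "b \<in> centre UNIV" using ideal(1) unfolding ideal_of_def by blast
  then have "central b" by (simp add: centre_UNIV_iff)
  show "nonunits_of (R \<inter> centre UNIV) \<subseteq> P"
  proof
    fix y assume y: "y \<in> nonunits_of (R \<inter> centre UNIV)"
    show "y \<in> P"
    proof (cases "y = 0")
      case True
      then show ?thesis using ideal(1) unfolding ideal_of_def by simp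
    next
      case False
      then have y': "y \<in> R" "central y" "inverse y \<notin> R"
        using y central_inverse unfolding nonunits_of_def by (auto simp: centre_UNIV_iff)
      then obtain m where "inverse b * y ^ m \<in> R"
        using exists_mult_power_mem[OF y'(1,2) False y'(3)] by blast
      moreover have "central (inverse b * y ^ m)"
        using central_mult central_inverse central_power \<open>central b\<close> y'(2) by blast
      ultimately have "b * (inverse b * y ^ m) \<in> P"
        using b(1) ideal(1) unfolding ideal_of_def by (simp add: centre_UNIV_iff)
      then have "y ^ m \<in> P" using b(2) by (simp flip: mult.assoc)
      then show ?thesis
        using prime_ideal_power_mem[OF P(1) is_subring_Int_centre] y unfolding nonunits_of_def by auto
    qed
  qed
qed

lemma prime_ideal_nonunits_centre: "prime_ideal_of (nonunits_of (R \<inter> centre UNIV)) (R \<inter> centre UNIV)"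
  by (rule prime_ideal_nonunits[OF valuation_ring_centre is_division_subring_centre])

lemma nonunits_centre_ne_zero: "nonunits_of (R \<inter> centre UNIV) \<noteq> {0}"
  using nonunit central_inverse unfolding nonunits_of_def by (auto simp: centre_UNIV_iff)

lemma krull_dim_one_centre: "krull_dim_one (R \<inter> centre UNIV)"
  by (rule krull_dim_one_if_unique_nonzero_prime[OF prime_ideal_zero[OF is_subring_Int_centre]
        prime_ideal_nonunits_centre nonunits_centre_ne_zero prime_ideal_eq_nonunits])

lemma G_domain_centre: "G_domain (R \<inter> centre UNIV)"
  by (rule G_domain_if_unique_nonzero_prime[OF prime_ideal_nonunits_centre nonunits_centre_ne_zero
        prime_ideal_eq_nonunits])

end

theorem theorem2p7:
  fixes R :: "'a::division_ring set"
  defines "F \<equiv> centre (UNIV :: 'a set)"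
  assumes noncomm: "\<exists>a b :: 'a. a * b \<noteq> b * a"
    and maxR: "maximal_subring R UNIV"
    and notsub: "\<not> F \<subseteq> R"
  shows "centre R = R \<inter> F \<and> maximal_subring (R \<inter> F) F \<and>
         (\<not> is_division_subring R \<longrightarrow>
            valuation_ring_of (R \<inter> F) F \<and> krull_dim_one (R \<inter> F) \<and>
            G_domain (R \<inter> F) \<and> quotient_field_of F (R \<inter> F)) \<and>
         (is_division_subring R \<longrightarrow>
            is_division_subring (R \<inter> F) \<and> finite_extension (R \<inter> F) F \<and>
            maximal_subring (R \<inter> F) F)"
proof -
  interpret max_subring R
    by (rule max_subring.intro[OF maxR notsub[unfolded F_def]])
  show ?thesis
  proof (cases "\<forall>a\<in>R. central a \<longrightarrow> a \<noteq> 0 \<longrightarrow> inverse a \<in> R")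
    case True
    then interpret max_subring_field_centre R
      by unfold_locales blast
    show ?thesis
      unfolding F_def
      using centre_eq maximal_subring_centre is_division_subring
        is_division_subring_Int_centre[OF is_division_subring] finite_extension_centre
      by simp
  next
    case False
    then obtain a where "a \<in> R" "central a" "a \<noteq> 0" "inverse a \<notin> R" by blast
    then interpret max_subring_nonunit_centre R a
      by unfold_locales
    show ?thesis
      unfolding F_def
      using centre_eq maximal_subring_centre not_division_subring valuation_ring_centre
        krull_dim_one_centre G_domain_centre quotient_field_of_valuation_ring[OF valuation_ring_centre]
      by simp
  qed
qed

end
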